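(* For real parameters $p,r$, the Gini mean $G_{p,r}$ is stable if and only if $pr(p+r)=0$; i.e. the only stable Gini means are the power means $G_{0,r}=B_r$, $G_{p,0}=B_p$, $G_{p,-p}=B_0$.
   Context: For $s,t>0$: $G_{p,r}(s,t)=\big(\frac{s^p+t^p}{s^r+t^r}\big)^{1/(p-r)}$ if $p\ne r$; $\exp\big(\frac{s^p\log s+t^p\log t}{s^p+t^p}\big)$ if $p=r\ne0$; $\sqrt{st}$ if $p=r=0$. Power mean: $B_r(s,t)=\big(\frac{s^r+t^r}2\big)^{1/r}$ for $r\ne0$, $B_0(s,t)=\sqrt{st}$. A mean $M$ is stable if $M(s,t)=M\big(M(s,M(s,t)),M(M(s,t),t)\big)$ for all $s,t>0$. *)

theory Defs
  imports Complex_Main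
begin

text \<open>Gini mean G_{p,r}(s,t), intended for s, t > 0.\<close>
definition gini_mean :: "real \<Rightarrow> real \<Rightarrow> real \<Rightarrow> real \<Rightarrow> real" where
  "gini_mean p r s t =
     (if p \<noteq> r then ((s powr p + t powr p) / (s powr r + t powr r)) powr (1 / (p - r))
      else if p \<noteq> 0 then exp ((s powr p * ln s + t powr p * ln t) / (s powr p + t powr p))
      else sqrt (s * t))"

text \<open>Power mean B_r(s,t), intended for s, t > 0.\<close>
definition power_mean :: "real \<Rightarrow> real \<Rightarrow> real \<Rightarrow> real" where
  "power_mean r s t = (if r \<noteq> 0 then ((s powr r + t powr r) / 2) powr (1 / r) else sqrt (s * t))"

definition stable_mean :: "(real \<Rightarrow> real \<Rightarrow> real) \<Rightarrow> bool" where
  "stable_mean M \<longleftrightarrow> (\<forall>s t. s > 0 \<longrightarrow> t > 0 \<longrightarrow>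
      M s t = M (M s (M s t)) (M (M s t) t))"

end

theory Submission
  imports Defs "HOL-Real_Asymp.Real_Asymp"
begin

text \<open>
  Power means are quasi-arithmetic, hence stable, and for \<open>p r (p + r) = 0\<close> the Gini mean is a
  power mean. Conversely, writing \<open>s = e\<^sup>a\<close>, \<open>t = e\<^sup>b\<close>, a Gini mean satisfies
  \<open>\<lambda> log G = \<lambda> (a + b)/2 + F (\<lambda> (b - a))\<close> for a suitable \<open>\<lambda> \<noteq> 0\<close> and an even kernel
  \<open>F x = c x\<^sup>2 + e x\<^sup>4 + o(x\<^sup>4)\<close>. Stability is a functional equation for \<open>F\<close>, whose
  fourth order Taylor coefficient at \<open>0\<close> is \<open>-(3 e / 8 + c\<^sup>3)\<close>. This coefficient equals
  \<open>-P (P - 1) (2 P - 1) / 256\<close> with \<open>P = p / (p - r)\<close> when \<open>p \<noteq> r\<close>, and \<open>-1/128\<close> when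
  \<open>p = r \<noteq> 0\<close>; it vanishes exactly when \<open>p r (p + r) = 0\<close>.
\<close>

lemma stable_mean_cong:
  assumes eq: "\<And>s t. s > 0 \<Longrightarrow> t > 0 \<Longrightarrow> M s t = N s t"
    and pos: "\<And>s t. s > 0 \<Longrightarrow> t > 0 \<Longrightarrow> N s t > 0"
  shows "stable_mean M \<longleftrightarrow> stable_mean N"
  unfolding stable_mean_def by (simp add: eq pos)

lemma quasi_arithmetic_mean_stable:
  fixes \<phi> :: "real \<Rightarrow> real"
  assumes inj: "inj_on \<phi> {0<..}"
    and pos: "\<And>s t. s > 0 \<Longrightarrow> t > 0 \<Longrightarrow> M s t > 0"
    and mid: "\<And>s t. s > 0 \<Longrightarrow> t > 0 \<Longrightarrow> \<phi> (M s t) = (\<phi> s + \<phi> t) / 2"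
  shows "stable_mean M"
  unfolding stable_mean_def
proof (intro allI impI)
  fix s t :: real
  assume s: "s > 0" and t: "t > 0"
  define m where "m = M s t"
  have m: "m > 0" using pos s t by (simp add: m_def)
  have "\<phi> (M (M s m) (M m t)) = ((\<phi> s + \<phi> m) / 2 + (\<phi> m + \<phi> t) / 2) / 2"
    using s t m by (simp add: mid pos)
  also have "\<dots> = \<phi> m"
    using mid[OF s t] by (simp add: m_def field_simps)
  finally have "M (M s m) (M m t) = m"
    using inj s t m by (auto intro: inj_onD pos)
  then show "M s t = M (M s (M s t)) (M (M s t) t)"
    by (simp add: m_def)
qed

lemma power_mean_pos:
  assumes "s > 0" "t > 0"
  shows "power_mean q s t > 0"
proof -
  have "s powr q + t powr q > 0"
    using assms by (simp add: add_pos_pos)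
  then show ?thesis
    using assms by (simp add: power_mean_def)
qed

lemma power_mean_stable: "stable_mean (power_mean q)"
proof (cases "q = 0")
  case True
  have "ln (power_mean q s t) = (ln s + ln t) / 2" if "s > 0" "t > 0" for s t
    using that True by (simp add: power_mean_def ln_sqrt ln_mult)
  then show ?thesis
    by (intro quasi_arithmetic_mean_stable[where \<phi> = ln]) (auto simp: inj_on_def power_mean_pos)
next
  case False
  have "power_mean q s t powr q = (s powr q + t powr q) / 2" if "s > 0" "t > 0" for s t
    using that False by (simp add: power_mean_def powr_powr add_pos_pos)
  moreover have "inj_on (\<lambda>x. x powr q) {0<..}"
    by (rule inj_on_inverseI[where g = "\<lambda>y. y powr (1 / q)"]) (use False in \<open>simp add: powr_powr\<close>)
  ultimately show ?thesis
    by (intro quasi_arithmetic_mean_stable[where \<phi> = "\<lambda>x. x powr q"]) (auto simp: power_mean_pos)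
qed

lemma gini_mean_eq_power_mean:
  assumes "p * r * (p + r) = 0" and s: "s > 0" and t: "t > 0"
  shows "gini_mean p r s t = power_mean (if p = 0 then r else if r = 0 then p else 0) s t"
proof -
  have sum_pos: "s powr q + t powr q > 0" for q
    using s t by (simp add: add_pos_pos)
  consider "p = 0" | "p \<noteq> 0" "r = 0" | "p \<noteq> 0" "r \<noteq> 0" "r = - p"
    using assms(1) by (auto simp: add_eq_0_iff)
  then show ?thesis
  proof cases
    case 1
    then show ?thesis
      using sum_pos[of r] s t by (simp add: gini_mean_def power_mean_def powr_minus_divide powr_divide)
  next
    case 2
    then show ?thesis
      using s t by (simp add: gini_mean_def power_mean_def)
  next
    case 3
    have "s powr (- p) + t powr (- p) = (s powr p + t powr p) / (s powr p * t powr p)"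
      using s t by (simp add: powr_minus field_simps)
    then have "(s powr p + t powr p) / (s powr (- p) + t powr (- p)) = (s * t) powr p"
      using sum_pos[of p] s t by (simp add: powr_mult)
    then have "gini_mean p r s t = ((s * t) powr p) powr (1 / (2 * p))"
      using 3 by (simp add: gini_mean_def)
    also have "\<dots> = sqrt (s * t)"
      using 3 s t by (simp add: powr_powr powr_half_sqrt)
    finally show ?thesis
      using 3 by (simp add: power_mean_def)
  qed
qed

text \<open>\<open>log_mean F a b\<close> stands for \<open>\<lambda> log M (e\<^bsup>a/\<lambda>\<^esup>, e\<^bsup>b/\<lambda>\<^esup>)\<close>, where \<open>M\<close> is a symmetric
  homogeneous mean with kernel \<open>F\<close>.\<close>

definition log_mean :: "(real \<Rightarrow> real) \<Rightarrow> real \<Rightarrow> real \<Rightarrow> real" where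
  "log_mean F a b = (a + b) / 2 + F (b - a)"

definition stability_defect :: "(real \<Rightarrow> real) \<Rightarrow> real \<Rightarrow> real" where
  "stability_defect F y =
     (let m = log_mean F (- y / 2) (y / 2)
      in log_mean F (log_mean F (- y / 2) m) (log_mean F m (y / 2)) - m)"

lemma stability_defect_eq:
  "stability_defect F y =
     (F (y / 2 + F y) + F (y / 2 - F y) - F y) / 2 + F (y / 2 + F (y / 2 - F y) - F (y / 2 + F y))"
proof -
  define u where "u = (F y - y / 2) / 2 + F (y / 2 + F y)"
  define v where "v = (F y + y / 2) / 2 + F (y / 2 - F y)"
  have "log_mean F (- y / 2) (y / 2) = F y" "log_mean F (- y / 2) (F y) = u"
    "log_mean F (F y) (y / 2) = v"
    by (simp_all add: log_mean_def u_def v_def add.commute)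
  then have "stability_defect F y = (u + v) / 2 + F (v - u) - F y"
    by (simp add: stability_defect_def log_mean_def[of F u v])
  also have "v - u = y / 2 + F (y / 2 - F y) - F (y / 2 + F y)"
    by (simp add: u_def v_def diff_divide_distrib add_divide_distrib)
  finally show ?thesis
    by (simp add: u_def v_def diff_divide_distrib add_divide_distrib)
qed

lemma stable_imp_stability_defect_zero:
  assumes lam: "lam \<noteq> 0"
    and log_coords: "\<And>a b. G (exp a) (exp b) = exp (log_mean F (lam * a) (lam * b) / lam)"
    and "stable_mean G"
  shows "stability_defect F y = 0"
proof -
  define \<phi> where "\<phi> a = exp (a / lam)" for a
  have G_\<phi>: "G (\<phi> a) (\<phi> b) = \<phi> (log_mean F a b)" for a b
    using log_coords[of "a / lam" "b / lam"] lam by (simp add: \<phi>_def)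
  define m where "m = log_mean F (- y / 2) (y / 2)"
  have "\<phi> m = \<phi> (log_mean F (log_mean F (- y / 2) m) (log_mean F m (y / 2)))"
    using \<open>stable_mean G\<close> unfolding stable_mean_def
    by (metis G_\<phi> \<phi>_def exp_gt_zero m_def)
  then show ?thesis
    using lam by (simp add: stability_defect_def \<phi>_def m_def Let_def)
qed

definition gini_kernel :: "real \<Rightarrow> real \<Rightarrow> real" where
  "gini_kernel P x = ln (cosh (P * x / 2) / cosh ((P - 1) * x / 2))"

definition gini_diagonal_kernel :: "real \<Rightarrow> real" where
  "gini_diagonal_kernel x = x / 2 * tanh (x / 2)"

lemma exp_add_exp_eq_cosh: "exp u + exp v = 2 * exp ((u + v) / 2) * cosh ((v - u) / 2 :: real)"
  by (simp add: cosh_def exp_add[symmetric] field_simps)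

lemma exp_diff_exp_eq_sinh: "exp v - exp u = 2 * exp ((u + v) / 2) * sinh ((v - u) / 2 :: real)"
  by (simp add: sinh_def exp_add[symmetric] field_simps)

lemma gini_mean_log_coords:
  assumes "p \<noteq> r"
  shows "gini_mean p r (exp a) (exp b)
           = exp (log_mean (gini_kernel (p / (p - r))) ((p - r) * a) ((p - r) * b) / (p - r))"
proof -
  define l where "l = p - r"
  have l: "l \<noteq> 0" using assms by (simp add: l_def)
  have "p / l * l = p"
    using l by simp
  moreover from this have "(p / l - 1) * l = r"
    by (simp add: algebra_simps l_def)
  ultimately have kernel:
    "gini_kernel (p / l) (l * b - l * a) = ln (cosh (p * (b - a) / 2) / cosh (r * (b - a) / 2))"
    by (simp add: gini_kernel_def right_diff_distrib[symmetric] mult.assoc[symmetric])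
  have sums: "exp a powr q + exp b powr q = 2 * exp (q * (a + b) / 2) * cosh (q * (b - a) / 2)" for q
    by (simp add: exp_powr_real exp_add_exp_eq_cosh algebra_simps)
  have pos: "exp a powr q + exp b powr q > 0" for q
    by (simp add: add_pos_pos)
  have "ln ((exp a powr p + exp b powr p) / (exp a powr r + exp b powr r))
      = (l * a + l * b) / 2 + gini_kernel (p / l) (l * b - l * a)"
    unfolding sums kernel by (simp add: ln_div ln_mult l_def algebra_simps diff_divide_distrib)
  then show ?thesis
    using assms pos[of p] pos[of r] unfolding l_def
    by (simp add: gini_mean_def log_mean_def powr_def mult.commute)
qed

lemma gini_mean_diagonal_log_coords:
  assumes "p \<noteq> 0"
  shows "gini_mean p p (exp a) (exp b) = exp (log_mean gini_diagonal_kernel (p * a) (p * b) / p)"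
proof -
  define c where "c = (a + b) / 2"
  define x where "x = b - a"
  have "(exp (p * a) * a + exp (p * b) * b) / (exp (p * a) + exp (p * b))
      = c + x / 2 * ((exp (p * b) - exp (p * a)) / (exp (p * a) + exp (p * b)))"
    using add_pos_pos[of "exp (p * a)" "exp (p * b)"] by (simp add: c_def x_def field_simps)
  also have "\<dots> = c + x / 2 * tanh (p * x / 2)"
    by (simp add: exp_add_exp_eq_cosh exp_diff_exp_eq_sinh tanh_def x_def algebra_simps)
  also have "\<dots> = log_mean gini_diagonal_kernel (p * a) (p * b) / p"
    using assms by (simp add: log_mean_def gini_diagonal_kernel_def c_def x_def field_simps)
  finally show ?thesis
    using assms by (simp add: gini_mean_def exp_powr_real mult.commute)
qed

definition quartic :: "real \<Rightarrow> real \<Rightarrow> real \<Rightarrow> real" where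
  "quartic c e x = c * x^2 + e * x^4"

lemma quartic_diff:
  "quartic c e x - quartic c e x' = (x - x') * (c * (x + x') + e * (x + x') * (x^2 + x'^2))"
  by (simp add: quartic_def algebra_simps power2_eq_square power4_eq_xxxx)

lemma tendsto_at_right_0_transform:
  fixes f g :: "real \<Rightarrow> real"
  assumes "(f \<longlongrightarrow> L) (at_right 0)" and "\<And>y. y > 0 \<Longrightarrow> f y = g y"
  shows "(g \<longlongrightarrow> L) (at_right 0)"
  using assms(1)
  by (rule Lim_transform_eventually)
    (use eventually_at_right_less[of 0] assms(2) in \<open>auto elim: eventually_mono\<close>)

lemma filterlim_at_right_0_if_ratio_tendsto:
  fixes u :: "real \<Rightarrow> real"
  assumes ratio: "((\<lambda>y. u y / y) \<longlongrightarrow> L) (at_right 0)" and "L > 0"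
  shows "filterlim u (at_right 0) (at_right 0)"
proof -
  have "\<forall>\<^sub>F y in at_right 0. u y / y > 0"
    using order_tendstoD(1)[OF ratio \<open>L > 0\<close>] .
  then have pos: "\<forall>\<^sub>F y in at_right 0. u y > 0"
    using eventually_at_right_less[of 0] by eventually_elim (simp add: zero_less_divide_iff)
  have "(u \<longlongrightarrow> 0) (at_right 0)"
    using tendsto_mult[OF ratio tendsto_ident_at, simplified]
    by (rule tendsto_at_right_0_transform) simp
  with pos show ?thesis
    by (simp add: filterlim_at eventually_mono)
qed

lemma quartic_approx_div_tendsto:
  assumes F: "((\<lambda>x. (F x - quartic c e x) / x^4) \<longlongrightarrow> 0) (at_right 0)"
  shows "((\<lambda>x. F x / x) \<longlongrightarrow> 0) (at_right 0)"
proof -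
  define \<rho> where "\<rho> x = (F x - quartic c e x) / x^4" for x
  have "((\<lambda>x. c * x + e * x^3 + \<rho> x * x^3) \<longlongrightarrow> c * 0 + e * 0^3 + 0 * 0^3) (at_right 0)"
    using F unfolding \<rho>_def[abs_def] by (intro tendsto_intros)
  then have "((\<lambda>x. c * x + e * x^3 + \<rho> x * x^3) \<longlongrightarrow> 0) (at_right 0)"
    by simp
  then show ?thesis
    by (rule tendsto_at_right_0_transform)
      (simp add: \<rho>_def quartic_def field_simps power2_eq_square power3_eq_cube power4_eq_xxxx)
qed

lemma quartic_approx_comp_div_tendsto:
  assumes F: "((\<lambda>x. (F x - quartic c e x) / x^4) \<longlongrightarrow> 0) (at_right 0)"
    and u: "filterlim u (at_right 0) (at_right 0)"
    and ratio: "((\<lambda>y. u y / y) \<longlongrightarrow> L) (at_right 0)"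
  shows "((\<lambda>y. F (u y) / y) \<longlongrightarrow> 0) (at_right 0)"
proof -
  have "((\<lambda>y. F (u y) / u y * (u y / y)) \<longlongrightarrow> 0 * L) (at_right 0)"
    using filterlim_compose[OF quartic_approx_div_tendsto[OF F] u] ratio by (rule tendsto_mult)
  moreover have "\<forall>\<^sub>F y in at_right 0. F (u y) / u y * (u y / y) = F (u y) / y"
    using u unfolding filterlim_at by (auto elim: eventually_mono)
  ultimately show ?thesis
    using Lim_transform_eventually by fastforce
qed

text \<open>Error propagation: \<open>F u - G v = u\<^sup>4 \<rho> u + (u - v) Q u v\<close> for the quartic \<open>G\<close>, with
  \<open>\<rho> = (F - G) / x\<^sup>4\<close> and a difference quotient \<open>Q\<close> of \<open>G\<close> vanishing at \<open>(0, 0)\<close>.\<close>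

lemma quartic_approx_comp_tendsto:
  assumes F: "((\<lambda>x. (F x - quartic c e x) / x^4) \<longlongrightarrow> 0) (at_right 0)"
    and u: "filterlim u (at_right 0) (at_right 0)"
    and ratio: "((\<lambda>y. u y / y) \<longlongrightarrow> L) (at_right 0)"
    and close: "((\<lambda>y. (u y - v y) / y^4) \<longlongrightarrow> 0) (at_right 0)"
  shows "((\<lambda>y. (F (u y) - quartic c e (v y)) / y^4) \<longlongrightarrow> 0) (at_right 0)"
proof -
  define \<rho> where "\<rho> x = (F x - quartic c e x) / x^4" for x
  define Q where "Q y = c * (u y + v y) + e * (u y + v y) * (u y ^ 2 + v y ^ 2)" for y
  have u0: "(u \<longlongrightarrow> 0) (at_right 0)" and u_pos: "\<forall>\<^sub>F y in at_right 0. u y > 0"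
    using u by (auto simp: filterlim_at elim: eventually_mono)
  define w where "w y = (u y - v y) / y^4" for y
  have "((\<lambda>y. u y - w y * y^4) \<longlongrightarrow> 0) (at_right 0)"
    using tendsto_diff[OF u0 tendsto_mult[OF close[folded w_def] tendsto_power[OF tendsto_ident_at, of 4]]]
    by simp
  then have v0: "(v \<longlongrightarrow> 0) (at_right 0)"
    by (rule tendsto_at_right_0_transform) (simp add: w_def)
  have "(Q \<longlongrightarrow> 0) (at_right 0)"
    unfolding Q_def using u0 v0 by (auto intro!: tendsto_eq_intros)
  then have "((\<lambda>y. \<rho> (u y) * (u y / y)^4 + (u y - v y) / y^4 * Q y) \<longlongrightarrow> 0 * L^4 + 0 * 0)
      (at_right 0)"
    using filterlim_compose[OF F u] ratio close unfolding \<rho>_def o_def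
    by (intro tendsto_intros) auto
  moreover have "\<forall>\<^sub>F y in at_right 0. \<rho> (u y) * (u y / y)^4 + (u y - v y) / y^4 * Q y
      = (F (u y) - quartic c e (v y)) / y^4"
    using eventually_at_right_less[of 0] u_pos
  proof eventually_elim
    case (elim y)
    have "\<rho> (u y) * (u y / y)^4 + (u y - v y) / y^4 * Q y
        = ((F (u y) - quartic c e (u y)) + (u y - v y) * Q y) / y^4"
      using elim by (simp add: \<rho>_def power_divide add_divide_distrib)
    also have "(F (u y) - quartic c e (u y)) + (u y - v y) * Q y = F (u y) - quartic c e (v y)"
      using quartic_diff[of c e "u y" "v y"] by (simp add: Q_def)
    finally show ?case .
  qed
  ultimately show ?thesis
    using Lim_transform_eventually by fastforce
qed

lemma stability_defect_quartic_tendsto: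
  "((\<lambda>y. stability_defect (quartic c e) y / y^4) \<longlongrightarrow> - (3 * e / 8) - c^3) (at_right 0)"
  unfolding stability_defect_eq quartic_def
  by (real_asymp simp add: field_simps power2_eq_square power3_eq_cube)

lemma stability_defect_args_ratio_tendsto:
  assumes F: "((\<lambda>x. (F x - quartic c e x) / x^4) \<longlongrightarrow> 0) (at_right 0)"
  shows "((\<lambda>y. (y / 2 + F y) / y) \<longlongrightarrow> 1 / 2) (at_right 0)"
    and "((\<lambda>y. (y / 2 - F y) / y) \<longlongrightarrow> 1 / 2) (at_right 0)"
    and "((\<lambda>y. (y / 2 + F (y / 2 - F y) - F (y / 2 + F y)) / y) \<longlongrightarrow> 1 / 2) (at_right 0)"
proof -
  note Fy = quartic_approx_div_tendsto[OF F]
  show r1: "((\<lambda>y. (y / 2 + F y) / y) \<longlongrightarrow> 1 / 2) (at_right 0)"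
    using tendsto_add[OF tendsto_const Fy, of "1 / 2", simplified]
    by (rule tendsto_at_right_0_transform) (simp add: add_divide_distrib)
  show r2: "((\<lambda>y. (y / 2 - F y) / y) \<longlongrightarrow> 1 / 2) (at_right 0)"
    using tendsto_diff[OF tendsto_const Fy, of "1 / 2", simplified]
    by (rule tendsto_at_right_0_transform) (simp add: diff_divide_distrib)
  show "((\<lambda>y. (y / 2 + F (y / 2 - F y) - F (y / 2 + F y)) / y) \<longlongrightarrow> 1 / 2) (at_right 0)"
    using tendsto_diff[OF tendsto_add[OF tendsto_const
          quartic_approx_comp_div_tendsto[OF F filterlim_at_right_0_if_ratio_tendsto[OF r2] r2]]
        quartic_approx_comp_div_tendsto[OF F filterlim_at_right_0_if_ratio_tendsto[OF r1] r1],
        of "1 / 2", simplified]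
    by (rule tendsto_at_right_0_transform) (simp add: diff_divide_distrib add_divide_distrib)
qed

lemma stability_defect_tendsto:
  assumes F: "((\<lambda>x. (F x - quartic c e x) / x^4) \<longlongrightarrow> 0) (at_right 0)"
  shows "((\<lambda>y. stability_defect F y / y^4) \<longlongrightarrow> - (3 * e / 8) - c^3) (at_right 0)"
proof -
  define w1 where "w1 H y = y / 2 + H y" for H :: "real \<Rightarrow> real" and y
  define w2 where "w2 H y = y / 2 - H y" for H :: "real \<Rightarrow> real" and y
  define w3 where "w3 H y = y / 2 + H (w2 H y) - H (w1 H y)" for H :: "real \<Rightarrow> real" and y
  note ratios = stability_defect_args_ratio_tendsto[OF F, folded w1_def w2_def, folded w3_def]
  note r1 = ratios(1) and r2 = ratios(2) and r3 = ratios(3)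
  note f1 = filterlim_at_right_0_if_ratio_tendsto[OF r1]
   and f2 = filterlim_at_right_0_if_ratio_tendsto[OF r2]
   and f3 = filterlim_at_right_0_if_ratio_tendsto[OF r3]
  define err where "err u v y = (F (u F y) - quartic c e (v (quartic c e) y)) / y^4" for u v y
  have e1: "(err w1 w1 \<longlongrightarrow> 0) (at_right 0)"
    using quartic_approx_comp_tendsto[OF F f1 r1, of "w1 (quartic c e)"] F
    by (simp add: err_def[abs_def] w1_def)
  have e2: "(err w2 w2 \<longlongrightarrow> 0) (at_right 0)"
    using quartic_approx_comp_tendsto[OF F f2 r2, of "w2 (quartic c e)"] tendsto_minus[OF F]
    by (simp add: err_def[abs_def] w2_def minus_divide_left)
  have "w3 F y - w3 (quartic c e) y
      = (F (w2 F y) - quartic c e (w2 (quartic c e) y)) - (F (w1 F y) - quartic c e (w1 (quartic c e) y))"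
    for y by (simp add: w3_def)
  then have "(w3 F y - w3 (quartic c e) y) / y^4 = err w2 w2 y - err w1 w1 y" for y
    by (simp add: err_def diff_divide_distrib)
  then have e3: "(err w3 w3 \<longlongrightarrow> 0) (at_right 0)"
    using quartic_approx_comp_tendsto[OF F f3 r3, of "w3 (quartic c e)"] tendsto_diff[OF e2 e1]
    by (simp add: err_def[abs_def])
  have "stability_defect F y / y^4
      = stability_defect (quartic c e) y / y^4
        + ((err w1 w1 y + err w2 w2 y - (F y - quartic c e y) / y^4) / 2 + err w3 w3 y)" for y
    by (simp add: stability_defect_eq err_def w1_def w2_def w3_def diff_divide_distrib add_divide_distrib)
  moreover have "((\<lambda>y. stability_defect (quartic c e) y / y^4
        + ((err w1 w1 y + err w2 w2 y - (F y - quartic c e y) / y^4) / 2 + err w3 w3 y))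
      \<longlongrightarrow> - (3 * e / 8) - c^3 + ((0 + 0 - 0) / 2 + 0)) (at_right 0)"
    by (intro tendsto_intros stability_defect_quartic_tendsto e1 e2 e3 F) simp
  ultimately show ?thesis
    by simp
qed

lemma stable_imp_quartic_coeffs:
  assumes "lam \<noteq> 0"
    and "\<And>a b. G (exp a) (exp b) = exp (log_mean F (lam * a) (lam * b) / lam)"
    and "stable_mean G"
    and F: "((\<lambda>x. (F x - quartic c e x) / x^4) \<longlongrightarrow> 0) (at_right 0)"
  shows "3 * e + 8 * c^3 = 0"
proof -
  have "((\<lambda>y. stability_defect F y / y^4) \<longlongrightarrow> 0) (at_right 0)"
    using stable_imp_stability_defect_zero[OF assms(1-3)] by simp
  with stability_defect_tendsto[OF F] have "- (3 * e / 8) - c^3 = 0"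
    by (rule tendsto_unique[OF trivial_limit_at_right_real])
  then show ?thesis
    by simp
qed

lemma gini_kernel_quartic_approx:
  "((\<lambda>x. (gini_kernel P x - quartic ((2 * P - 1) / 8) (- (2 * P - 1) * (P^2 + (P - 1)^2) / 192) x) / x^4)
     \<longlongrightarrow> 0) (at_right 0)"
  unfolding gini_kernel_def quartic_def by (real_asymp simp add: field_simps power2_eq_square)

lemma gini_diagonal_kernel_quartic_approx:
  "((\<lambda>x. (gini_diagonal_kernel x - quartic (1 / 4) (- 1 / 48) x) / x^4) \<longlongrightarrow> 0) (at_right 0)"
  unfolding gini_diagonal_kernel_def quartic_def by (real_asymp simp add: field_simps power2_eq_square)

lemma stable_gini_mean_diagonal:
  assumes "stable_mean (gini_mean p p)"
  shows "p = 0"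
proof (rule ccontr)
  assume "p \<noteq> 0"
  from stable_imp_quartic_coeffs[OF this gini_mean_diagonal_log_coords[OF this] assms
      gini_diagonal_kernel_quartic_approx]
  show False
    by (simp add: power3_eq_cube)
qed

lemma stable_gini_mean_off_diagonal:
  assumes "p \<noteq> r" and "stable_mean (gini_mean p r)"
  shows "p * r * (p + r) = 0"
proof -
  define P where "P = p / (p - r)"
  have "p - r \<noteq> 0"
    using assms(1) by simp
  from stable_imp_quartic_coeffs[OF this gini_mean_log_coords[OF assms(1), folded P_def] assms(2)
      gini_kernel_quartic_approx[of P]]
  have "P * (P - 1) * (2 * P - 1) = 0"
    by (simp add: field_simps power2_eq_square power3_eq_cube)
  moreover have "P - 1 = r / (p - r)" "2 * P - 1 = (p + r) / (p - r)"
    using \<open>p - r \<noteq> 0\<close> by (simp_all add: P_def field_simps)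
  ultimately have "P * (r / (p - r)) * ((p + r) / (p - r)) = 0"
    by (simp only:)
  then show ?thesis
    using \<open>p - r \<noteq> 0\<close> by (simp add: P_def)
qed

theorem mainTheorem13:
  fixes p r :: real
  shows "stable_mean (gini_mean p r) \<longleftrightarrow> p * r * (p + r) = 0"
proof
  assume "stable_mean (gini_mean p r)"
  then show "p * r * (p + r) = 0"
    by (cases "p = r") (auto dest: stable_gini_mean_diagonal stable_gini_mean_off_diagonal)
next
  assume "p * r * (p + r) = 0"
  then have "stable_mean (gini_mean p r)
      \<longleftrightarrow> stable_mean (power_mean (if p = 0 then r else if r = 0 then p else 0))"
    by (intro stable_mean_cong gini_mean_eq_power_mean power_mean_pos)
  then show "stable_mean (gini_mean p r)"
    using power_mean_stable by blast
qed

end
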